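(* For all integers $k,l\ge1$, $sat^*([k]\times[l],\vee_2)=La^*([k]\times[l],\vee_2)=k+l-1$.
   Context: $[k]\times[l]$ is ordered coordinatewise. $\vee_2$ is the poset on three elements $a,b_1,b_2$ whose only relations are $a<b_1,a<b_2$. For posets $P,R$, $P$ is a strong subposet of $R$ if there is an injection $i:P\to R$ with $p\le_P p'\iff i(p)\le_R i(p')$. A subset $F\subseteq Q$ is strong $P$-free if $P$ is not a strong subposet of $F$; it is strong $P$-saturated if it is strong $P$-free and for every $x\in Q\setminus F$, $P$ is a strong subposet of $F\cup\{x\}$. $La^*(Q,P)$ is the maximum size of a strong $P$-free subset of $Q$ and $sat^*(Q,P)$ the minimum size of a strong $P$-saturated subset of $Q$. *)

theory Defs
  imports Main
begin

definition grid :: "nat \<Rightarrow> nat \<Rightarrow> (nat \<times> nat) set" where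
  "grid k l = {1..k} \<times> {1..l}"

definition grid_le :: "nat \<times> nat \<Rightarrow> nat \<times> nat \<Rightarrow> bool" where
  "grid_le x y \<longleftrightarrow> fst x \<le> fst y \<and> snd x \<le> snd y"

text \<open>The poset V_2 on {0,1,2}: a = 0, b1 = 1, b2 = 2, with only relations a < b1, a < b2.\<close>
definition V2 :: "nat set" where
  "V2 = {0, 1, 2}"

definition V2_le :: "nat \<Rightarrow> nat \<Rightarrow> bool" where
  "V2_le p q \<longleftrightarrow> p = q \<or> (p = 0 \<and> (q = 1 \<or> q = 2))"

definition strong_subposet ::
  "'a set \<Rightarrow> ('a \<Rightarrow> 'a \<Rightarrow> bool) \<Rightarrow> 'b set \<Rightarrow> ('b \<Rightarrow> 'b \<Rightarrow> bool) \<Rightarrow> bool" where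
  "strong_subposet P leP R leR \<longleftrightarrow>
     (\<exists>i. inj_on i P \<and> i ` P \<subseteq> R \<and>
          (\<forall>p\<in>P. \<forall>p'\<in>P. leP p p' \<longleftrightarrow> leR (i p) (i p')))"

definition strong_free ::
  "'b set \<Rightarrow> ('b \<Rightarrow> 'b \<Rightarrow> bool) \<Rightarrow> 'a set \<Rightarrow> ('a \<Rightarrow> 'a \<Rightarrow> bool) \<Rightarrow> 'b set \<Rightarrow> bool" where
  "strong_free Q leQ P leP F \<longleftrightarrow> F \<subseteq> Q \<and> \<not> strong_subposet P leP F leQ"

definition strong_saturated ::
  "'b set \<Rightarrow> ('b \<Rightarrow> 'b \<Rightarrow> bool) \<Rightarrow> 'a set \<Rightarrow> ('a \<Rightarrow> 'a \<Rightarrow> bool) \<Rightarrow> 'b set \<Rightarrow> bool" where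
  "strong_saturated Q leQ P leP F \<longleftrightarrow> strong_free Q leQ P leP F \<and>
     (\<forall>x \<in> Q - F. strong_subposet P leP (insert x F) leQ)"

text \<open>La^*(Q,P): maximum size of a strong P-free subset; sat^*(Q,P): minimum size of a
  strong P-saturated subset (meaningful for finite Q).\<close>
definition La_star ::
  "'b set \<Rightarrow> ('b \<Rightarrow> 'b \<Rightarrow> bool) \<Rightarrow> 'a set \<Rightarrow> ('a \<Rightarrow> 'a \<Rightarrow> bool) \<Rightarrow> nat" where
  "La_star Q leQ P leP = Max (card ` {F. strong_free Q leQ P leP F})"

definition sat_star ::
  "'b set \<Rightarrow> ('b \<Rightarrow> 'b \<Rightarrow> bool) \<Rightarrow> 'a set \<Rightarrow> ('a \<Rightarrow> 'a \<Rightarrow> bool) \<Rightarrow> nat" where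
  "sat_star Q leQ P leP = Min (card ` {F. strong_saturated Q leQ P leP F})"

end

theory Submission
  imports Defs "HOL-Library.Product_Order"
begin

(* A set F is strongly V_2-free iff any two elements of F lying strictly above a common element
   of F are comparable.  In the grid, if x and y lie in the same row with x left of y, and z lies
   above x in its column, then x < y, x < z and y, z are incomparable.  Hence every row contains
   at most one element of F that is not the top of its column, and the last row contains none;
   labelling each column top by its column and every other element by k plus its row injects F
   into {1..k+l-1}.  If F is saturated, the labelling is onto: an empty column, or a row below
   the last one consisting of column tops only, would leave room for a point whose insertion
   creates no V.  The chain formed by the first column and the last row is saturated, so both
   extremal numbers equal k+l-1. *)

lemma finite_has_maximal_maximizing:
  fixes f :: "'a::order \<Rightarrow> 'b::linorder"
  assumes "finite S" "S \<noteq> {}" "mono f"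
  obtains e where "e \<in> S" "\<forall>y\<in>S. f y \<le> f e" "\<forall>y\<in>S. e \<le> y \<longrightarrow> y = e"
proof -
  obtain d where "d \<in> S" and d_max: "\<forall>y\<in>S. f y \<le> f d"
    using Max_in[of "f ` S"] Max_ge[of "f ` S"] assms(1,2) by fastforce
  obtain e where "e \<in> S" "d \<le> e" and e_maximal: "\<forall>y\<in>S. e \<le> y \<longrightarrow> e = y"
    using finite_has_maximal2[OF assms(1) \<open>d \<in> S\<close>] by blast
  have "\<forall>y\<in>S. f y \<le> f e"
    using d_max monoD[OF assms(3) \<open>d \<le> e\<close>] by (blast intro: order.trans)
  with \<open>e \<in> S\<close> e_maximal show ?thesis
    using that by auto
qed

definition V_free :: "'a::order set \<Rightarrow> bool" where
  "V_free F \<longleftrightarrow> (\<forall>a\<in>F. \<forall>b\<in>F. \<forall>c\<in>F. a < b \<longrightarrow> a < c \<longrightarrow> b \<le> c \<or> c \<le> b)"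

definition V_saturated :: "'a::order set \<Rightarrow> 'a set \<Rightarrow> bool" where
  "V_saturated Q F \<longleftrightarrow> F \<subseteq> Q \<and> V_free F \<and> (\<forall>x\<in>Q - F. \<not> V_free (insert x F))"

lemma V_freeD:
  "V_free F \<Longrightarrow> a \<in> F \<Longrightarrow> b \<in> F \<Longrightarrow> c \<in> F \<Longrightarrow> a < b \<Longrightarrow> a < c \<Longrightarrow> b \<le> c \<or> c \<le> b"
  unfolding V_free_def by blast

lemma strong_subposet_V2_iff: "strong_subposet V2 V2_le F (\<le>) \<longleftrightarrow> \<not> V_free F"
proof
  assume "strong_subposet V2 V2_le F (\<le>)"
  then obtain i where "inj_on i V2" "i ` V2 \<subseteq> F"
    and order_iff: "\<forall>p\<in>V2. \<forall>q\<in>V2. V2_le p q \<longleftrightarrow> i p \<le> i q"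
    unfolding strong_subposet_def by blast
  have V2: "0 \<in> V2" "1 \<in> V2" "2 \<in> V2"
    by (simp_all add: V2_def)
  have "i 0 \<noteq> i 1" "i 0 \<noteq> i 2"
    using inj_onD[OF \<open>inj_on i V2\<close>] V2 by force+
  moreover have "i 0 \<le> i 1" "i 0 \<le> i 2" "\<not> i 1 \<le> i 2" "\<not> i 2 \<le> i 1"
    using order_iff[rule_format, OF V2(1) V2(2)] order_iff[rule_format, OF V2(1) V2(3)]
      order_iff[rule_format, OF V2(2) V2(3)] order_iff[rule_format, OF V2(3) V2(2)]
    by (simp_all add: V2_le_def)
  ultimately have "i 0 < i 1" "i 0 < i 2" "\<not> i 1 \<le> i 2" "\<not> i 2 \<le> i 1"
    by (simp_all add: order.strict_iff_order)
  moreover have "i 0 \<in> F" "i 1 \<in> F" "i 2 \<in> F"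
    using \<open>i ` V2 \<subseteq> F\<close> V2 by blast+
  ultimately show "\<not> V_free F"
    using V_freeD[of F "i 0" "i 1" "i 2"] by blast
next
  assume "\<not> V_free F"
  then obtain a b c where "a \<in> F" "b \<in> F" "c \<in> F" "a < b" "a < c" "\<not> b \<le> c" "\<not> c \<le> b"
    unfolding V_free_def by blast
  define i where "i n = (if n = 0 then a else if n = 1 then b else c)" for n :: nat
  have "a \<noteq> b" "a \<noteq> c" "b \<noteq> c" "\<not> b \<le> a" "\<not> c \<le> a"
    using \<open>a < b\<close> \<open>a < c\<close> \<open>\<not> b \<le> c\<close> by auto
  then have "inj_on i V2" "\<forall>p\<in>V2. \<forall>q\<in>V2. V2_le p q \<longleftrightarrow> i p \<le> i q"
    using \<open>a < b\<close> \<open>a < c\<close> \<open>\<not> b \<le> c\<close> \<open>\<not> c \<le> b\<close>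
    by (auto simp: i_def V2_def V2_le_def inj_on_def)
  moreover have "i ` V2 \<subseteq> F"
    using \<open>a \<in> F\<close> \<open>b \<in> F\<close> \<open>c \<in> F\<close> by (auto simp: i_def V2_def)
  ultimately show "strong_subposet V2 V2_le F (\<le>)"
    unfolding strong_subposet_def by blast
qed

lemma strong_free_V2_iff: "strong_free Q (\<le>) V2 V2_le F \<longleftrightarrow> F \<subseteq> Q \<and> V_free F"
  by (simp add: strong_free_def strong_subposet_V2_iff)

lemma strong_saturated_V2_iff: "strong_saturated Q (\<le>) V2 V2_le F \<longleftrightarrow> V_saturated Q F"
  by (simp add: strong_saturated_def strong_free_V2_iff strong_subposet_V2_iff V_saturated_def)

lemma V_free_insertI:
  assumes "V_free F"
    and "\<forall>b\<in>F. \<forall>c\<in>F. x < b \<longrightarrow> x < c \<longrightarrow> b \<le> c \<or> c \<le> b"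
    and "\<forall>a\<in>F. \<forall>c\<in>F. a < x \<longrightarrow> a < c \<longrightarrow> x \<le> c \<or> c \<le> x"
  shows "V_free (insert x F)"
  unfolding V_free_def
proof (intro ballI impI)
  fix a b c assume "a \<in> insert x F" "b \<in> insert x F" "c \<in> insert x F" "a < b" "a < c"
  then show "b \<le> c \<or> c \<le> b"
    using assms(2,3) V_freeD[OF assms(1)] order.refl by blast
qed

lemma V_free_chain_above:
  assumes "V_free F" "e \<in> F" "e \<le> x"
  shows "\<forall>b\<in>F. \<forall>c\<in>F. x < b \<longrightarrow> x < c \<longrightarrow> b \<le> c \<or> c \<le> b"
  using V_freeD[OF assms(1,2)] assms(3) order.strict_trans1 by blast

lemma V_free_insert_above:
  assumes "V_free F" "e \<in> F" "e \<le> x"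
    and below: "\<forall>a\<in>F. a < x \<longrightarrow> a \<le> e"
    and above: "\<forall>c\<in>F. e < c \<longrightarrow> x \<le> c"
  shows "V_free (insert x F)"
proof (rule V_free_insertI[OF assms(1) V_free_chain_above[OF assms(1-3)]], intro ballI impI)
  fix a c assume "a \<in> F" "c \<in> F" "a < x" "a < c"
  show "x \<le> c \<or> c \<le> x"
  proof (cases "e < c")
    case True
    then show ?thesis
      using above \<open>c \<in> F\<close> by blast
  next
    case False
    have "a \<le> e"
      using below \<open>a \<in> F\<close> \<open>a < x\<close> by blast
    then have "c \<le> e"
      using V_freeD[OF assms(1) \<open>a \<in> F\<close> \<open>e \<in> F\<close> \<open>c \<in> F\<close> _ \<open>a < c\<close>] False \<open>a < c\<close>
      by (cases "a = e") (auto simp: order.strict_iff_order)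
    then show ?thesis
      using \<open>e \<le> x\<close> by (simp add: order.trans)
  qed
qed

lemma V_free_least_strict_upper_bound:
  assumes "V_free F" "finite F" "e \<in> F" "r \<in> F" "e < r"
  obtains p where "p \<in> F" "e < p" "\<forall>c\<in>F. e < c \<longrightarrow> p \<le> c"
proof -
  obtain p where p: "p \<in> F" "e < p" and minimal: "\<forall>c\<in>F. e < c \<longrightarrow> c \<le> p \<longrightarrow> p = c"
    using finite_has_minimal[of "{c\<in>F. e < c}"] assms by auto
  have "p \<le> c" if "c \<in> F" "e < c" for c
    using V_freeD[OF assms(1,3) p(1) that(1) p(2) that(2)] minimal that by auto
  with p that show ?thesis by blast
qed

lemma grid_le_eq: "grid_le = (\<le>)"
  by (auto simp: fun_eq_iff grid_le_def less_eq_prod_def)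

lemma finite_grid: "finite (grid k l)"
  by (simp add: grid_def)

lemma mono_fst: "mono fst" and mono_snd: "mono snd"
  by (auto intro: monoI fst_mono snd_mono)

definition col_top :: "(nat \<times> nat) set \<Rightarrow> nat \<times> nat \<Rightarrow> bool" where
  "col_top F x \<longleftrightarrow> (\<forall>z\<in>F. fst z = fst x \<longrightarrow> snd z \<le> snd x)"

definition label :: "nat \<Rightarrow> (nat \<times> nat) set \<Rightarrow> nat \<times> nat \<Rightarrow> nat" where
  "label k F x = (if col_top F x then fst x else k + snd x)"

lemma V_free_non_col_top_unique_in_row:
  assumes "V_free F" "x \<in> F" "y \<in> F" "\<not> col_top F x" "\<not> col_top F y" "snd x = snd y"
  shows "x = y"
proof -
  have False if "u \<in> F" "v \<in> F" "\<not> col_top F u" "snd u = snd v" "fst u < fst v" for u v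
  proof -
    obtain z where "z \<in> F" "fst z = fst u" "snd u < snd z"
      using \<open>\<not> col_top F u\<close> by (auto simp: col_top_def not_le)
    then have "u < v" "u < z" "\<not> v \<le> z" "\<not> z \<le> v"
      using that by (auto simp: less_prod_def less_eq_prod_def)
    then show False
      using V_freeD[OF assms(1) \<open>u \<in> F\<close> \<open>v \<in> F\<close> \<open>z \<in> F\<close>] by blast
  qed
  then show ?thesis
    using assms by (metis linorder_neqE_nat prod_eq_iff)
qed

lemma label_inj_on:
  assumes "V_free F" "F \<subseteq> grid k l"
  shows "inj_on (label k F) F"
proof (rule inj_onI)
  fix x y assume "x \<in> F" "y \<in> F" and label_eq: "label k F x = label k F y"
  have top_iff: "label k F z \<le> k \<longleftrightarrow> col_top F z" if "z \<in> F" for z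
    using that assms(2) by (auto simp: label_def grid_def)
  then have "col_top F x \<longleftrightarrow> col_top F y"
    using label_eq \<open>x \<in> F\<close> \<open>y \<in> F\<close> by metis
  then consider "col_top F x" "col_top F y" | "\<not> col_top F x" "\<not> col_top F y"
    by blast
  then show "x = y"
  proof cases
    case 1
    then have "fst x = fst y"
      using label_eq by (simp add: label_def)
    moreover have "snd y \<le> snd x" "snd x \<le> snd y"
      using 1 \<open>x \<in> F\<close> \<open>y \<in> F\<close> \<open>fst x = fst y\<close> unfolding col_top_def by simp_all
    ultimately show ?thesis
      by (simp add: prod_eq_iff)
  next
    case 2
    then show ?thesis
      using label_eq V_free_non_col_top_unique_in_row[OF assms(1) \<open>x \<in> F\<close> \<open>y \<in> F\<close>]
      by (simp add: label_def)
  qed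
qed

lemma label_image_subset:
  assumes "F \<subseteq> grid k l"
  shows "label k F ` F \<subseteq> {1..k + l - 1}"
proof
  fix n assume "n \<in> label k F ` F"
  then obtain x where "x \<in> F" "n = label k F x"
    by blast
  then have "x \<in> grid k l"
    using assms by blast
  show "n \<in> {1..k + l - 1}"
  proof (cases "col_top F x")
    case False
    then obtain z where "z \<in> F" "snd x < snd z"
      by (auto simp: col_top_def not_le)
    then show ?thesis
      using \<open>n = label k F x\<close> \<open>x \<in> grid k l\<close> False assms by (force simp: label_def grid_def)
  qed (use \<open>n = label k F x\<close> \<open>x \<in> grid k l\<close> in \<open>auto simp: label_def grid_def\<close>)
qed

theorem card_le_if_V_free:
  assumes "F \<subseteq> grid k l" "V_free F"
  shows "card F \<le> k + l - 1"
  using card_inj_on_le[OF label_inj_on[OF assms(2,1)] label_image_subset[OF assms(1)]] by simp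

lemma V_free_insert_last_row:
  assumes "F \<subseteq> grid k l" "V_free F" "\<forall>y\<in>F. i < fst y"
  shows "V_free (insert (i, l) F)"
proof (rule V_free_insertI[OF assms(2)])
  show "\<forall>b\<in>F. \<forall>c\<in>F. (i, l) < b \<longrightarrow> (i, l) < c \<longrightarrow> b \<le> c \<or> c \<le> b"
    using assms(1) by (fastforce simp: grid_def less_prod_def less_eq_prod_def)
  have "\<not> a \<le> (i, l)" if "a \<in> F" for a
    using assms(3) that by (auto simp: less_eq_prod_def)
  then show "\<forall>a\<in>F. \<forall>c\<in>F. a < (i, l) \<longrightarrow> a < c \<longrightarrow> (i, l) \<le> c \<or> c \<le> (i, l)"
    by (blast dest: less_imp_le)
qed

lemma V_free_insert_last_column:
  assumes "F \<subseteq> grid k l" "V_free F" "\<forall>y\<in>F. j < snd y"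
  shows "V_free (insert (k, j) F)"
proof (rule V_free_insertI[OF assms(2)])
  show "\<forall>b\<in>F. \<forall>c\<in>F. (k, j) < b \<longrightarrow> (k, j) < c \<longrightarrow> b \<le> c \<or> c \<le> b"
    using assms(1) by (fastforce simp: grid_def less_prod_def less_eq_prod_def)
  have "\<not> a \<le> (k, j)" if "a \<in> F" for a
    using assms(3) that by (auto simp: less_eq_prod_def)
  then show "\<forall>a\<in>F. \<forall>c\<in>F. a < (k, j) \<longrightarrow> a < c \<longrightarrow> (k, j) \<le> c \<or> c \<le> (k, j)"
    by (blast dest: less_imp_le)
qed

lemma V_free_extend_into_empty_column:
  assumes "F \<subseteq> grid k l" "V_free F" "i \<in> {1..k}" "1 \<le> l" and empty: "\<forall>y\<in>F. fst y \<noteq> i"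
  shows "\<exists>x\<in>grid k l - F. V_free (insert x F)"
proof (cases "\<exists>y\<in>F. fst y < i")
  case False
  have "i < fst y" if "y \<in> F" for y
  proof -
    have "\<not> fst y < i" "fst y \<noteq> i"
      using False empty that by blast+
    then show ?thesis
      by simp
  qed
  then have "V_free (insert (i, l) F)"
    using V_free_insert_last_row[OF assms(1,2)] by blast
  moreover have "(i, l) \<in> grid k l - F"
    using assms by (auto simp: grid_def)
  ultimately show ?thesis
    by blast
next
  case True
  define L where "L = {y\<in>F. fst y < i}"
  have "finite L" "L \<noteq> {}"
    using True finite_subset[OF assms(1) finite_grid] by (auto simp: L_def)
  then obtain e where "e \<in> L" and rightmost: "\<forall>y\<in>L. fst y \<le> fst e"
    and maximal: "\<forall>y\<in>L. e \<le> y \<longrightarrow> y = e"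
    by (rule finite_has_maximal_maximizing[OF _ _ mono_fst])
  have "V_free (insert (i, snd e) F)"
  proof (rule V_free_insert_above[OF assms(2)])
    show "e \<in> F" "e \<le> (i, snd e)"
      using \<open>e \<in> L\<close> by (auto simp: L_def less_eq_prod_def)
    show "\<forall>a\<in>F. a < (i, snd e) \<longrightarrow> a \<le> e"
      using rightmost empty by (fastforce simp: L_def less_prod_def less_eq_prod_def)
    show "\<forall>c\<in>F. e < c \<longrightarrow> (i, snd e) \<le> c"
      using maximal empty by (fastforce simp: L_def less_prod_def less_eq_prod_def)
  qed
  moreover have "(i, snd e) \<in> grid k l - F"
    using assms \<open>e \<in> L\<close> by (auto simp: L_def grid_def)
  ultimately show ?thesis
    by blast
qed

lemma V_free_insert_below_parent:
  fixes F :: "(nat \<times> nat) set"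
  assumes "V_free F" "e \<in> F" "p \<in> F" "e < p" "snd e \<le> j" "j < snd p"
    and parent: "\<forall>c\<in>F. e < c \<longrightarrow> p \<le> c"
    and highest: "\<forall>y\<in>F. snd y \<le> j \<longrightarrow> snd y \<le> snd e"
  shows "V_free (insert (fst p, j) F)"
proof -
  define x where "x = (fst p, j)"
  have "x \<le> p" "e \<le> x"
    using assms(4-6) by (auto simp: x_def less_eq_prod_def less_le_not_le)
  have "x \<le> c \<or> c \<le> x" if "a \<in> F" "c \<in> F" "a < x" "a < c" for a c
  proof (rule ccontr)
    assume incomparable: "\<not> (x \<le> c \<or> c \<le> x)"
    have "a < p"
      using \<open>a < x\<close> \<open>x \<le> p\<close> by simp
    with V_freeD[OF assms(1) \<open>a \<in> F\<close> \<open>p \<in> F\<close> \<open>c \<in> F\<close> _ \<open>a < c\<close>] have "c \<le> p"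
      using incomparable \<open>x \<le> p\<close> order.trans by blast
    then have "j < snd c"
      using incomparable by (auto simp: x_def less_eq_prod_def)
    have "\<not> e \<le> c"
    proof
      assume "e \<le> c"
      moreover have "e \<noteq> c"
        using \<open>snd e \<le> j\<close> \<open>j < snd c\<close> by auto
      ultimately have "p \<le> c"
        using parent \<open>c \<in> F\<close> by (simp add: order.strict_iff_order)
      then have "c = p"
        using \<open>c \<le> p\<close> by simp
      then show False
        using incomparable \<open>x \<le> p\<close> by simp
    qed
    then have "fst c < fst e"
      using \<open>snd e \<le> j\<close> \<open>j < snd c\<close> by (auto simp: less_eq_prod_def)
    moreover have "snd a \<le> j"
      using snd_mono[of a x] \<open>a < x\<close> by (simp add: x_def)
    then have "snd a \<le> snd e"
      using highest \<open>a \<in> F\<close> by blast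
    ultimately have "a < e"
      using \<open>a < c\<close> by (auto simp: less_eq_prod_def less_le_not_le)
    then show False
      using V_freeD[OF assms(1) \<open>a \<in> F\<close> \<open>e \<in> F\<close> \<open>c \<in> F\<close> _ \<open>a < c\<close>] \<open>\<not> e \<le> c\<close>
        \<open>snd e \<le> j\<close> \<open>j < snd c\<close> by (auto simp: less_eq_prod_def)
  qed
  then show ?thesis
    unfolding x_def[symmetric]
    using V_free_insertI[OF assms(1) V_free_chain_above[OF assms(1,2) \<open>e \<le> x\<close>]] by blast
qed

lemma V_free_extend_into_row_of_col_tops:
  assumes "F \<subseteq> grid k l" "V_free F" "(k, l) \<in> F" "j \<in> {1..<l}"
    and tops: "\<forall>y\<in>F. snd y = j \<longrightarrow> col_top F y"
  shows "\<exists>x\<in>grid k l - F. V_free (insert x F)"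
proof (cases "\<exists>y\<in>F. snd y \<le> j")
  case False
  then have "V_free (insert (k, j) F)"
    by (intro V_free_insert_last_column[OF assms(1,2)]) (auto simp: not_le)
  moreover have "(k, j) \<in> grid k l - F"
    using assms False by (auto simp: grid_def)
  ultimately show ?thesis
    by blast
next
  case True
  define D where "D = {y\<in>F. snd y \<le> j}"
  have "finite F"
    using finite_subset[OF assms(1) finite_grid] .
  then have "finite D"
    by (simp add: D_def)
  have "D \<noteq> {}"
    using True by (force simp: D_def)
  obtain e where "e \<in> D" and highest: "\<forall>y\<in>D. snd y \<le> snd e"
    and maximal: "\<forall>y\<in>D. e \<le> y \<longrightarrow> y = e"
    using finite_has_maximal_maximizing[OF \<open>finite D\<close> \<open>D \<noteq> {}\<close> mono_snd] by blast
  have "e \<in> F" "snd e \<le> j"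
    using \<open>e \<in> D\<close> by (auto simp: D_def)
  moreover have "e < (k, l)"
    using \<open>e \<in> F\<close> \<open>snd e \<le> j\<close> assms(1,4) by (auto simp: grid_def less_prod_def less_eq_prod_def)
  ultimately obtain p where "p \<in> F" "e < p" and parent: "\<forall>c\<in>F. e < c \<longrightarrow> p \<le> c"
    using V_free_least_strict_upper_bound[OF assms(2) \<open>finite F\<close> _ assms(3)] by blast
  have "j < snd p"
  proof (rule ccontr)
    assume "\<not> j < snd p"
    then have "p \<in> D"
      using \<open>p \<in> F\<close> by (simp add: D_def)
    then show False
      using maximal \<open>e < p\<close> by (auto simp: order.strict_iff_order)
  qed
  have "\<forall>y\<in>F. snd y \<le> j \<longrightarrow> snd y \<le> snd e"
    using highest unfolding D_def by blast
  then have "V_free (insert (fst p, j) F)"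
    using V_free_insert_below_parent[OF assms(2) \<open>e \<in> F\<close> \<open>p \<in> F\<close> \<open>e < p\<close> \<open>snd e \<le> j\<close> \<open>j < snd p\<close> parent]
    by blast
  moreover have "(fst p, j) \<notin> F"
    using tops \<open>p \<in> F\<close> \<open>j < snd p\<close> by (force simp: col_top_def)
  moreover have "(fst p, j) \<in> grid k l"
    using \<open>p \<in> F\<close> assms(1,4) by (auto simp: grid_def)
  ultimately show ?thesis
    by blast
qed

lemma V_saturated_grid_top:
  assumes "V_saturated (grid k l) F" "1 \<le> k" "1 \<le> l"
  shows "(k, l) \<in> F"
proof (rule ccontr)
  assume "(k, l) \<notin> F"
  have "V_free F" and below: "\<forall>c\<in>F. c \<le> (k, l)"
    using assms(1) by (auto simp: V_saturated_def grid_def less_eq_prod_def)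
  then have "V_free (insert (k, l) F)"
    by (intro V_free_insertI) (blast dest: leD)+
  then show False
    using assms \<open>(k, l) \<notin> F\<close> by (auto simp: V_saturated_def grid_def)
qed

lemma V_saturated_grid_column_nonempty:
  assumes "V_saturated (grid k l) F" "i \<in> {1..k}" "1 \<le> l"
  shows "\<exists>y\<in>F. fst y = i"
proof (rule ccontr)
  assume "\<not> (\<exists>y\<in>F. fst y = i)"
  then have "\<forall>y\<in>F. fst y \<noteq> i"
    by simp
  moreover have "F \<subseteq> grid k l" "V_free F"
    using assms(1) by (simp_all add: V_saturated_def)
  ultimately obtain x where "x \<in> grid k l - F" "V_free (insert x F)"
    using V_free_extend_into_empty_column assms(2,3) by metis
  then show False
    using assms(1) by (simp add: V_saturated_def)
qed

lemma V_saturated_grid_row_has_non_col_top: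
  assumes "V_saturated (grid k l) F" "j \<in> {1..<l}" "1 \<le> k"
  shows "\<exists>y\<in>F. snd y = j \<and> \<not> col_top F y"
proof (rule ccontr)
  assume "\<not> (\<exists>y\<in>F. snd y = j \<and> \<not> col_top F y)"
  then have "\<forall>y\<in>F. snd y = j \<longrightarrow> col_top F y"
    by simp
  moreover have "F \<subseteq> grid k l" "V_free F" "(k, l) \<in> F"
    using assms V_saturated_grid_top[of k l F] by (simp_all add: V_saturated_def)
  ultimately obtain x where "x \<in> grid k l - F" "V_free (insert x F)"
    using V_free_extend_into_row_of_col_tops assms(2) by metis
  then show False
    using assms(1) by (simp add: V_saturated_def)
qed

theorem card_ge_if_V_saturated:
  assumes "V_saturated (grid k l) F" "1 \<le> k" "1 \<le> l"
  shows "k + l - 1 \<le> card F"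
proof -
  have "finite F"
    using assms(1) finite_subset[OF _ finite_grid] unfolding V_saturated_def by blast
  have "n \<in> label k F ` F" if "n \<in> {1..k + l - 1}" for n
  proof (cases "n \<le> k")
    case True
    define column where "column = {y\<in>F. fst y = n}"
    have "\<exists>y\<in>F. fst y = n"
      using V_saturated_grid_column_nonempty[OF assms(1) _ assms(3), of n] that True by simp
    then have "column \<noteq> {}"
      unfolding column_def by blast
    moreover have "finite column"
      using \<open>finite F\<close> by (simp add: column_def)
    ultimately obtain t where "t \<in> column" "\<forall>y\<in>column. snd y \<le> snd t"
      using finite_has_maximal_maximizing[OF \<open>finite column\<close> \<open>column \<noteq> {}\<close> mono_snd] by metis
    then have "t \<in> F" "fst t = n" "col_top F t"
      unfolding column_def col_top_def by blast+
    then have "n = label k F t"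
      by (simp add: label_def)
    then show ?thesis
      using \<open>t \<in> F\<close> by (rule image_eqI)
  next
    case False
    then have "n - k \<in> {1..<l}"
      using that by auto
    then obtain y where "y \<in> F" "snd y = n - k" "\<not> col_top F y"
      using V_saturated_grid_row_has_non_col_top[OF assms(1) _ assms(2)] by blast
    then have "n = label k F y"
      using False by (simp add: label_def)
    then show ?thesis
      using \<open>y \<in> F\<close> by (rule image_eqI)
  qed
  then have "card {1..k + l - 1} \<le> card (label k F ` F)"
    by (intro card_mono finite_imageI \<open>finite F\<close> subsetI)
  also have "\<dots> \<le> card F"
    by (rule card_image_le[OF \<open>finite F\<close>])
  finally show ?thesis
    by simp
qed

definition corner_chain :: "nat \<Rightarrow> nat \<Rightarrow> (nat \<times> nat) set" where
  "corner_chain k l = {x \<in> grid k l. fst x = 1 \<or> snd x = l}"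

lemma V_saturated_corner_chain:
  assumes "1 \<le> k" "1 \<le> l"
  shows "V_saturated (grid k l) (corner_chain k l)"
proof -
  have "x \<le> y \<or> y \<le> x" if "x \<in> corner_chain k l" "y \<in> corner_chain k l" for x y
    using that by (auto simp: corner_chain_def grid_def less_eq_prod_def)
  then have "V_free (corner_chain k l)"
    unfolding V_free_def by blast
  moreover have "\<not> V_free (insert x (corner_chain k l))" if "x \<in> grid k l - corner_chain k l" for x
  proof -
    define a where "a = (1 :: nat, snd x)"
    have "a \<in> corner_chain k l" "(1, l) \<in> corner_chain k l"
      using that assms by (auto simp: a_def corner_chain_def grid_def)
    moreover have "a < x" "a < (1, l)" "\<not> x \<le> (1, l)" "\<not> (1, l) \<le> x"
      using that by (auto simp: a_def corner_chain_def grid_def less_prod_def less_eq_prod_def)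
    ultimately show ?thesis
      unfolding V_free_def by blast
  qed
  ultimately show ?thesis
    by (auto simp: V_saturated_def corner_chain_def)
qed

lemma card_corner_chain:
  assumes "1 \<le> k" "1 \<le> l"
  shows "card (corner_chain k l) = k + l - 1"
proof -
  have sat: "V_saturated (grid k l) (corner_chain k l)"
    using V_saturated_corner_chain[OF assms] .
  then have "corner_chain k l \<subseteq> grid k l" "V_free (corner_chain k l)"
    by (simp_all add: V_saturated_def)
  then show ?thesis
    using card_le_if_V_free card_ge_if_V_saturated[OF sat assms] by (meson order.antisym)
qed

lemma finite_card_image_subsets: "finite A \<Longrightarrow> finite (card ` {F. F \<subseteq> A \<and> P F})"
  by (rule finite_imageI, rule finite_subset[of _ "Pow A"]) auto

lemma La_star_grid_V2:
  assumes "1 \<le> k" "1 \<le> l"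
  shows "La_star (grid k l) (\<le>) V2 V2_le = k + l - 1"
  unfolding La_star_def strong_free_V2_iff
proof (rule Max_eqI)
  show "finite (card ` {F. F \<subseteq> grid k l \<and> V_free F})"
    by (rule finite_card_image_subsets[OF finite_grid])
  show "n \<le> k + l - 1" if "n \<in> card ` {F. F \<subseteq> grid k l \<and> V_free F}" for n
    using that card_le_if_V_free by blast
  show "k + l - 1 \<in> card ` {F. F \<subseteq> grid k l \<and> V_free F}"
    using V_saturated_corner_chain[OF assms] card_corner_chain[OF assms]
    unfolding V_saturated_def by (metis (mono_tags, lifting) image_eqI mem_Collect_eq)
qed

lemma sat_star_grid_V2:
  assumes "1 \<le> k" "1 \<le> l"
  shows "sat_star (grid k l) (\<le>) V2 V2_le = k + l - 1"
  unfolding sat_star_def strong_saturated_V2_iff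
proof (rule Min_eqI)
  have "{F. V_saturated (grid k l) F} = {F. F \<subseteq> grid k l \<and> V_saturated (grid k l) F}"
    by (auto simp: V_saturated_def)
  then show "finite (card ` {F. V_saturated (grid k l) F})"
    using finite_card_image_subsets[OF finite_grid] by metis
  show "k + l - 1 \<le> n" if "n \<in> card ` {F. V_saturated (grid k l) F}" for n
    using that card_ge_if_V_saturated[OF _ assms] by blast
  show "k + l - 1 \<in> card ` {F. V_saturated (grid k l) F}"
    using V_saturated_corner_chain[OF assms] card_corner_chain[OF assms] by force
qed

theorem theorem1p9:
  fixes k l :: nat
  assumes "k \<ge> 1" and "l \<ge> 1"
  shows "sat_star (grid k l) grid_le V2 V2_le = k + l - 1 \<and>
         La_star (grid k l) grid_le V2 V2_le = k + l - 1"
  unfolding grid_le_eq using sat_star_grid_V2[OF assms] La_star_grid_V2[OF assms] ..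

end
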